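(* Let $L\subset\mathbb{C}$ be a nonempty closed set without isolated points. Then the set of continuous functions $u:L\to\mathbb{C}$ for which there exist no $z_0\in L$, $r>0$ and holomorphic $F:D(z_0,r)\to\mathbb{C}$ with $F=u$ on $D(z_0,r)\cap L$ is a dense $G_\delta$ subset of $C(L)$.
   Context: $C(L)$ is the space of continuous functions $L\to\mathbb{C}$ with the topology of uniform convergence on compact subsets of $L$ (for compact $L$, the sup-norm topology). $D(z_0,r)$ is the open disk of center $z_0$ and radius $r$. *)

theory Defs
  imports "HOL-Analysis.Analysis"
begin

text \<open>Functions are
represented canonically as total functions complex \<Rightarrow> complex that vanish
outside L, so that each element of C(L) has exactly one representative.\<close>

definition CL :: "complex set \<Rightarrow> (complex \<Rightarrow> complex) set" where
  "CL L = {u. continuous_on L u \<and> (\<forall>z. z \<notin> L \<longrightarrow> u z = 0)}"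

definition cu_nbhd :: "complex set \<Rightarrow> (complex \<Rightarrow> complex) \<Rightarrow> complex set \<Rightarrow> real
    \<Rightarrow> (complex \<Rightarrow> complex) set" where
  "cu_nbhd L u K e = {v \<in> CL L. \<forall>z\<in>K. norm (v z - u z) < e}"

definition CL_top :: "complex set \<Rightarrow> (complex \<Rightarrow> complex) topology" where
  "CL_top L = topology (\<lambda>U. U \<subseteq> CL L \<and>
      (\<forall>u\<in>U. \<exists>K e. compact K \<and> K \<subseteq> L \<and> e > 0 \<and> cu_nbhd L u K e \<subseteq> U))"

end

theory Submission
  imports Defs "HOL-Complex_Analysis.Complex_Analysis"
begin

text \<open>
  For a ball \<open>ball w r\<close> meeting \<open>L\<close> and a bound \<open>M\<close>, consider the functions whose restriction
  to \<open>ball w r \<inter> L\<close> extends to a holomorphic function on the ball bounded by \<open>M\<close>. By Montel's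
  theorem this set is closed in \<open>C(L)\<close>. Its complement is dense: adding to \<open>u\<close> a small
  continuous bump that vanishes on \<open>L\<close> near a point \<open>z1\<close> but not at another point \<open>p\<close> of
  \<open>L \<inter> ball w r\<close> destroys every extension, because two extensions that agree on \<open>L\<close> near
  the non-isolated point \<open>z1\<close> agree at \<open>p\<close>. The set of nowhere extendable functions is the
  intersection of these open dense complements over countably many balls and integer bounds,
  and \<open>C(L)\<close> is a Baire space since it is complete for locally uniform convergence.
\<close>

section \<open>The topology of compact convergence on C(L)\<close>

lemma istopology_CL_top:
  "istopology (\<lambda>U. U \<subseteq> CL L \<and>
      (\<forall>u\<in>U. \<exists>K e. compact K \<and> K \<subseteq> L \<and> e > 0 \<and> cu_nbhd L u K e \<subseteq> U))"
  unfolding istopology_def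
proof (rule conjI; intro allI impI)
  fix S T assume S: "S \<subseteq> CL L \<and> (\<forall>u\<in>S. \<exists>K e. compact K \<and> K \<subseteq> L \<and> e > 0 \<and> cu_nbhd L u K e \<subseteq> S)"
    and T: "T \<subseteq> CL L \<and> (\<forall>u\<in>T. \<exists>K e. compact K \<and> K \<subseteq> L \<and> e > 0 \<and> cu_nbhd L u K e \<subseteq> T)"
  show "S \<inter> T \<subseteq> CL L \<and> (\<forall>u\<in>S \<inter> T. \<exists>K e. compact K \<and> K \<subseteq> L \<and> e > 0 \<and> cu_nbhd L u K e \<subseteq> S \<inter> T)"
  proof (intro conjI ballI)
    show "S \<inter> T \<subseteq> CL L"
      using S by blast
    fix u assume u: "u \<in> S \<inter> T"
    obtain K1 e1 where "compact K1" "K1 \<subseteq> L" "e1 > 0" "cu_nbhd L u K1 e1 \<subseteq> S"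
      using S u by blast
    moreover obtain K2 e2 where "compact K2" "K2 \<subseteq> L" "e2 > 0" "cu_nbhd L u K2 e2 \<subseteq> T"
      using T u by blast
    moreover have "cu_nbhd L u (K1 \<union> K2) (min e1 e2) \<subseteq> cu_nbhd L u K1 e1 \<inter> cu_nbhd L u K2 e2"
      unfolding cu_nbhd_def by auto
    ultimately show "\<exists>K e. compact K \<and> K \<subseteq> L \<and> e > 0 \<and> cu_nbhd L u K e \<subseteq> S \<inter> T"
      by (intro exI[of _ "K1 \<union> K2"] exI[of _ "min e1 e2"]) auto
  qed
next
  fix \<U> assume \<U>: "\<forall>U\<in>\<U>. U \<subseteq> CL L \<and> (\<forall>u\<in>U. \<exists>K e. compact K \<and> K \<subseteq> L \<and> e > 0 \<and> cu_nbhd L u K e \<subseteq> U)"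
  show "\<Union>\<U> \<subseteq> CL L \<and> (\<forall>u\<in>\<Union>\<U>. \<exists>K e. compact K \<and> K \<subseteq> L \<and> e > 0 \<and> cu_nbhd L u K e \<subseteq> \<Union>\<U>)"
  proof (intro conjI ballI)
    show "\<Union>\<U> \<subseteq> CL L"
      using \<U> by blast
    fix u assume "u \<in> \<Union>\<U>"
    then obtain U where "U \<in> \<U>" "u \<in> U"
      by blast
    moreover have "\<forall>u\<in>U. \<exists>K e. compact K \<and> K \<subseteq> L \<and> e > 0 \<and> cu_nbhd L u K e \<subseteq> U"
      using \<U> \<open>U \<in> \<U>\<close> by simp
    ultimately show "\<exists>K e. compact K \<and> K \<subseteq> L \<and> e > 0 \<and> cu_nbhd L u K e \<subseteq> \<Union>\<U>"
      by (meson Union_upper order_trans)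
  qed
qed

lemma openin_CL_top:
  "openin (CL_top L) U \<longleftrightarrow> U \<subseteq> CL L \<and>
      (\<forall>u\<in>U. \<exists>K e. compact K \<and> K \<subseteq> L \<and> e > 0 \<and> cu_nbhd L u K e \<subseteq> U)"
  unfolding CL_top_def using istopology_CL_top by simp

lemma openin_CL_topE:
  assumes "openin (CL_top L) U" "u \<in> U"
  obtains K e where "compact K" "K \<subseteq> L" "e > 0" "cu_nbhd L u K e \<subseteq> U"
proof -
  have "\<forall>u\<in>U. \<exists>K e. compact K \<and> K \<subseteq> L \<and> e > 0 \<and> cu_nbhd L u K e \<subseteq> U"
    using assms(1) unfolding openin_CL_top by (rule conjunct2)
  from bspec[OF this assms(2)] show ?thesis
    using that by blast
qed

lemma cu_nbhd_subset_CL: "cu_nbhd L u K e \<subseteq> CL L"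
  unfolding cu_nbhd_def by auto

lemma centre_in_cu_nbhd: "u \<in> CL L \<Longrightarrow> e > 0 \<Longrightarrow> u \<in> cu_nbhd L u K e"
  unfolding cu_nbhd_def by auto

lemma topspace_CL_top: "topspace (CL_top L) = CL L"
proof -
  have "openin (CL_top L) (CL L)"
    unfolding openin_CL_top
    by (intro conjI subset_refl ballI exI[of _ "{}"] exI[of _ "1::real"]) (auto simp: cu_nbhd_subset_CL)
  then show ?thesis
    by (metis openin_CL_top openin_subset openin_topspace subset_antisym)
qed

lemma openin_cu_nbhd:
  assumes "u \<in> CL L" "compact K" "K \<subseteq> L"
  shows "openin (CL_top L) (cu_nbhd L u K e)"
  unfolding openin_CL_top
proof (intro conjI ballI cu_nbhd_subset_CL)
  fix v assume v: "v \<in> cu_nbhd L u K e"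
  show "\<exists>K' e'. compact K' \<and> K' \<subseteq> L \<and> e' > 0 \<and> cu_nbhd L v K' e' \<subseteq> cu_nbhd L u K e"
  proof (cases "K = {}")
    case True
    then show ?thesis
      using assms by (intro exI[of _ K] exI[of _ 1]) (auto simp: cu_nbhd_def)
  next
    case False
    have "continuous_on K (\<lambda>z. norm (v z - u z))"
    proof -
      have "continuous_on L v" "continuous_on L u"
        using v assms(1) unfolding cu_nbhd_def CL_def by auto
      then show ?thesis
        by (intro continuous_intros continuous_on_subset[OF _ assms(3)])
    qed
    then obtain z0 where z0: "z0 \<in> K" "\<And>z. z \<in> K \<Longrightarrow> norm (v z - u z) \<le> norm (v z0 - u z0)"
      using continuous_attains_sup[OF assms(2) False] by blast
    define d where "d = e - norm (v z0 - u z0)"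
    have "d > 0"
      using v z0(1) unfolding cu_nbhd_def d_def by auto
    moreover have "cu_nbhd L v K d \<subseteq> cu_nbhd L u K e"
    proof
      fix w assume w: "w \<in> cu_nbhd L v K d"
      have "norm (w z - u z) < e" if "z \<in> K" for z
        using w z0(2)[OF that] norm_triangle_ineq[of "w z - v z" "v z - u z"] that
        unfolding cu_nbhd_def d_def by fastforce
      then show "w \<in> cu_nbhd L u K e"
        using w unfolding cu_nbhd_def by blast
    qed
    ultimately show ?thesis
      using assms by blast
  qed
qed

lemma mem_closure_of_CL_top:
  "u \<in> CL_top L closure_of S \<longleftrightarrow>
     u \<in> CL L \<and> (\<forall>K e. compact K \<longrightarrow> K \<subseteq> L \<longrightarrow> e > 0 \<longrightarrow> S \<inter> cu_nbhd L u K e \<noteq> {})"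
  (is "_ \<longleftrightarrow> u \<in> CL L \<and> ?meets")
proof
  assume "u \<in> CL_top L closure_of S"
  then have u: "u \<in> CL L"
    and meets: "\<And>T. u \<in> T \<Longrightarrow> openin (CL_top L) T \<Longrightarrow> \<exists>v. v \<in> S \<and> v \<in> T"
    unfolding in_closure_of topspace_CL_top by simp_all
  show "u \<in> CL L \<and> ?meets"
  proof (intro conjI allI impI u)
    fix K e assume "compact K" "K \<subseteq> L" "(e::real) > 0"
    then obtain v where "v \<in> S" "v \<in> cu_nbhd L u K e"
      using meets centre_in_cu_nbhd[OF u] openin_cu_nbhd[OF u] by meson
    then show "S \<inter> cu_nbhd L u K e \<noteq> {}"
      by blast
  qed
next
  assume asm: "u \<in> CL L \<and> ?meets"
  have "\<exists>v. v \<in> S \<and> v \<in> T" if "u \<in> T" and T: "openin (CL_top L) T" for T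
  proof -
    obtain K e where "compact K" "K \<subseteq> L" "e > 0" and KeT: "cu_nbhd L u K e \<subseteq> T"
      using T \<open>u \<in> T\<close> by (rule openin_CL_topE)
    then have "S \<inter> cu_nbhd L u K e \<noteq> {}"
      using asm[THEN conjunct2, rule_format] by blast
    with KeT show ?thesis
      by blast
  qed
  moreover have "u \<in> topspace (CL_top L)"
    using asm[THEN conjunct1] unfolding topspace_CL_top .
  ultimately show "u \<in> CL_top L closure_of S"
    unfolding in_closure_of by blast
qed

lemma dense_in_CL_top_iff:
  "CL_top L closure_of S = topspace (CL_top L) \<longleftrightarrow>
     (\<forall>u\<in>CL L. \<forall>K e. compact K \<longrightarrow> K \<subseteq> L \<longrightarrow> e > 0 \<longrightarrow> S \<inter> cu_nbhd L u K e \<noteq> {})"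
proof -
  have "CL_top L closure_of S = topspace (CL_top L) \<longleftrightarrow> (\<forall>u\<in>CL L. u \<in> CL_top L closure_of S)"
    using closure_of_subset_topspace[of "CL_top L" S] unfolding topspace_CL_top by blast
  then show ?thesis
    unfolding mem_closure_of_CL_top by (simp cong: ball_cong)
qed

section \<open>The Baire property of C(L)\<close>

lemma Cauchy_of_tail_bound:
  fixes X :: "nat \<Rightarrow> 'a::real_normed_vector"
  assumes bound: "\<And>n m. n0 \<le> n \<Longrightarrow> n \<le> m \<Longrightarrow> norm (X m - X n) \<le> E n" and E: "E \<longlonglongrightarrow> 0"
  shows "Cauchy X"
proof (rule CauchyI)
  fix e :: real assume "e > 0"
  then have "\<forall>\<^sub>F n in sequentially. n0 \<le> n \<and> E n < e / 2"
    using order_tendstoD(2)[OF E, of "e/2"] by (simp add: eventually_conj eventually_ge_at_top)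
  then obtain N where N: "n0 \<le> N" "E N < e / 2"
    unfolding eventually_sequentially by blast
  have "norm (X m - X m') < e" if "m \<ge> N" "m' \<ge> N" for m m'
  proof -
    have "norm (X m - X m') \<le> norm (X m - X N) + norm (X m' - X N)"
      using norm_triangle_ineq4[of "X m - X N" "X m' - X N"] by simp
    also have "\<dots> \<le> E N + E N"
      using bound[OF N(1) that(1)] bound[OF N(1) that(2)] by (rule add_mono)
    finally show ?thesis
      using N(2) by linarith
  qed
  then show "\<exists>M. \<forall>m\<ge>M. \<forall>m'\<ge>M. norm (X m - X m') < e"
    by blast
qed

lemma uniform_limit_of_tail_bound:
  assumes "\<And>n z. n0 \<le> n \<Longrightarrow> z \<in> S \<Longrightarrow> dist (f n z) (g z) \<le> E n" and E: "E \<longlonglongrightarrow> 0"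
  shows "uniform_limit S f g sequentially"
proof (rule uniform_limitI)
  fix e :: real assume "e > 0"
  have "\<forall>\<^sub>F n in sequentially. n0 \<le> n \<and> E n < e"
    using order_tendstoD(2)[OF E \<open>e > 0\<close>] by (simp add: eventually_conj eventually_ge_at_top)
  then show "\<forall>\<^sub>F n in sequentially. \<forall>z\<in>S. dist (f n z) (g z) < e"
    by eventually_elim (use assms(1) in fastforce)
qed

lemma continuous_on_Int_cballs:
  fixes f :: "'a::real_normed_vector \<Rightarrow> 'b::topological_space"
  assumes "\<And>R. continuous_on (S \<inter> cball 0 R) f"
  shows "continuous_on S f"
  unfolding continuous_on_eq_continuous_within
proof
  fix x assume "x \<in> S"
  have "at x within S = at x within (S \<inter> cball 0 (norm x + 1))"
    by (rule at_within_nhd[of x "ball 0 (norm x + 1)"]) auto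
  then show "continuous (at x within S) f"
    using assms[of "norm x + 1"] \<open>x \<in> S\<close> by (simp add: continuous_on_eq_continuous_within)
qed

lemma continuous_on_limit_of_exhausting:
  fixes U :: "nat \<Rightarrow> 'a::real_normed_vector \<Rightarrow> 'b::metric_space"
  assumes U: "\<And>n. continuous_on S (U n)" and "incseq K" and exhaust: "\<And>R. \<exists>n. S \<inter> cball 0 R \<subseteq> K n"
    and bound: "\<And>n z. z \<in> K n \<Longrightarrow> dist (U n z) (v z) \<le> E n" and E: "E \<longlonglongrightarrow> 0"
  shows "continuous_on S v"
proof (rule continuous_on_Int_cballs)
  fix R
  obtain n0 where "S \<inter> cball 0 R \<subseteq> K n0"
    using exhaust by blast
  then have "dist (U n z) (v z) \<le> E n" if "n0 \<le> n" "z \<in> S \<inter> cball 0 R" for n z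
    using bound monoD[OF \<open>incseq K\<close> that(1)] that(2) by blast
  then have "uniform_limit (S \<inter> cball 0 R) U v sequentially"
    using E by (rule uniform_limit_of_tail_bound)
  moreover have "\<forall>\<^sub>F n in sequentially. continuous_on (S \<inter> cball 0 R) (U n)"
    using continuous_on_subset[OF U, of "S \<inter> cball 0 R"] by simp
  ultimately show "continuous_on (S \<inter> cball 0 R) v"
    using uniform_limit_theorem trivial_limit_sequentially by blast
qed

lemma CL_limit_of_nested:
  fixes U :: "nat \<Rightarrow> complex \<Rightarrow> complex" and E :: "nat \<Rightarrow> real"
  assumes U: "\<And>n. U n \<in> CL L" and KL: "\<And>n. K n \<subseteq> L" and "incseq K"
    and exhaust: "\<And>R. \<exists>n. L \<inter> cball 0 R \<subseteq> K n"
    and near: "\<And>n m z. n \<le> m \<Longrightarrow> z \<in> K n \<Longrightarrow> norm (U m z - U n z) \<le> E n"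
    and E: "E \<longlonglongrightarrow> 0"
  obtains v where "v \<in> CL L" "\<And>n z. z \<in> K n \<Longrightarrow> norm (v z - U n z) \<le> E n"
proof -
  have covered: "\<exists>n. z \<in> K n" if "z \<in> L" for z
    using exhaust[of "norm z"] that by auto
  have convergent: "convergent (\<lambda>m. U m z)" if z: "z \<in> L" for z
  proof -
    obtain n0 where "z \<in> K n0"
      using covered[OF z] by blast
    then have "z \<in> K n" if "n0 \<le> n" for n
      using monoD[OF \<open>incseq K\<close> that] by blast
    then have "Cauchy (\<lambda>m. U m z)"
      using near by (intro Cauchy_of_tail_bound[of n0 "\<lambda>m. U m z" E, OF _ E]) auto
    then show ?thesis
      by (simp add: Cauchy_convergent_iff)
  qed
  define v where "v z = (if z \<in> L then lim (\<lambda>m. U m z) else 0)" for z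
  have lim_U: "(\<lambda>m. U m z) \<longlonglongrightarrow> v z" if "z \<in> L" for z
    using convergent[OF that] that by (simp add: v_def convergent_LIMSEQ_iff)
  have bound: "norm (v z - U n z) \<le> E n" if "z \<in> K n" for n z
  proof (rule Lim_norm_ubound[OF trivial_limit_sequentially])
    have "z \<in> L"
      using that KL by blast
    then show "(\<lambda>m. U m z - U n z) \<longlonglongrightarrow> v z - U n z"
      by (intro tendsto_diff lim_U tendsto_const)
    show "\<forall>\<^sub>F m in sequentially. norm (U m z - U n z) \<le> E n"
      using near[OF _ that] by (auto simp: eventually_sequentially)
  qed
  have "continuous_on L v"
  proof (rule continuous_on_limit_of_exhausting[OF _ \<open>incseq K\<close> exhaust _ E])
    show "continuous_on L (U n)" for n
      using U[of n] unfolding CL_def by blast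
    show "dist (U n z) (v z) \<le> E n" if "z \<in> K n" for n z
      using bound[OF that] by (simp add: dist_norm norm_minus_commute)
  qed
  then have "v \<in> CL L"
    unfolding CL_def by (simp add: v_def)
  with bound show ?thesis
    using that by blast
qed

text \<open>Nesting closed rather than open neighbourhoods keeps the limit of the nested centres
  inside all of them.\<close>

definition closed_cu_nbhd :: "complex set \<Rightarrow> (complex \<Rightarrow> complex) \<Rightarrow> complex set \<Rightarrow> real
    \<Rightarrow> (complex \<Rightarrow> complex) set" where
  "closed_cu_nbhd L u K e = {v \<in> CL L. \<forall>z\<in>K. norm (v z - u z) \<le> e}"

lemma cu_nbhd_subset_closed_cu_nbhd: "cu_nbhd L u K e \<subseteq> closed_cu_nbhd L u K e"
  unfolding cu_nbhd_def closed_cu_nbhd_def by auto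

lemma closed_cu_nbhd_subset_cu_nbhd:
  "K' \<subseteq> K \<Longrightarrow> e < e' \<Longrightarrow> closed_cu_nbhd L u K e \<subseteq> cu_nbhd L u K' e'"
  unfolding cu_nbhd_def closed_cu_nbhd_def by fastforce

lemma closed_cu_nbhd_inside_open_dense:
  assumes L: "closed L" and G: "openin (CL_top L) G" "CL_top L closure_of G = topspace (CL_top L)"
    and u: "u \<in> CL L" "compact K" "K \<subseteq> L" "e > 0"
  obtains u' K' e' where "u' \<in> CL L" "compact K'" "K \<subseteq> K'" "K' \<subseteq> L" "L \<inter> cball 0 R \<subseteq> K'"
    "e' > 0" "e' \<le> e / 2" "closed_cu_nbhd L u' K' e' \<subseteq> G \<inter> cu_nbhd L u K e"
proof -
  have "G \<inter> cu_nbhd L u K e \<noteq> {}"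
    using G(2)[unfolded dense_in_CL_top_iff, rule_format, OF u] .
  then obtain u' where u': "u' \<in> G \<inter> cu_nbhd L u K e"
    by blast
  have "openin (CL_top L) (G \<inter> cu_nbhd L u K e)"
    by (intro openin_Int G(1) openin_cu_nbhd u)
  then obtain K1 e1 where K1: "compact K1" "K1 \<subseteq> L" "e1 > 0"
    and sub: "cu_nbhd L u' K1 e1 \<subseteq> G \<inter> cu_nbhd L u K e"
    using u' by (rule openin_CL_topE)
  define K' where "K' = K \<union> K1 \<union> (L \<inter> cball 0 R)"
  define e' where "e' = min e1 e / 2"
  show ?thesis
  proof (rule that)
    show "u' \<in> CL L"
      using u' cu_nbhd_subset_CL by blast
    show "compact K'"
      unfolding K'_def using u(2) K1(1) L by (intro compact_Un closed_Int_compact compact_cball)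
    have "closed_cu_nbhd L u' K' e' \<subseteq> cu_nbhd L u' K1 e1"
      using K1(3) u(4) unfolding K'_def e'_def by (intro closed_cu_nbhd_subset_cu_nbhd) auto
    then show "closed_cu_nbhd L u' K' e' \<subseteq> G \<inter> cu_nbhd L u K e"
      using sub by (rule order_trans)
  qed (use u(3,4) K1(2,3) in \<open>auto simp: K'_def e'_def\<close>)
qed


lemma LIMSEQ_halving_zero:
  fixes E :: "nat \<Rightarrow> real"
  assumes "\<And>n. E n > 0" "\<And>n. E (Suc n) \<le> E n / 2"
  shows "E \<longlonglongrightarrow> 0"
proof (rule Lim_null_comparison)
  have "E n \<le> E 0 * (1/2) ^ n" for n
  proof (induction n)
    case (Suc n)
    then show ?case
      using assms(2)[of n] by simp
  qed simp
  then show "\<forall>\<^sub>F n in sequentially. norm (E n) \<le> E 0 * (1/2) ^ n"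
    using assms(1) by (simp add: less_imp_le)
  show "(\<lambda>n. E 0 * (1/2::real) ^ n) \<longlonglongrightarrow> 0"
    by (intro tendsto_mult_right_zero LIMSEQ_power_zero) simp
qed

lemma nested_closed_cu_nbhds_Inter_nonempty:
  fixes U :: "nat \<Rightarrow> complex \<Rightarrow> complex"
  assumes U: "\<And>n. U n \<in> CL L" and KK: "\<And>n. KK n \<subseteq> L" "\<And>n. KK n \<subseteq> KK (Suc n)"
    and exhaust: "\<And>n. L \<inter> cball 0 (real n) \<subseteq> KK (Suc n)"
    and E: "\<And>n. E n > 0" "\<And>n. E (Suc n) \<le> E n / 2"
    and nested: "\<And>n. closed_cu_nbhd L (U (Suc n)) (KK (Suc n)) (E (Suc n)) \<subseteq> closed_cu_nbhd L (U n) (KK n) (E n)"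
  shows "(\<Inter>n. closed_cu_nbhd L (U n) (KK n) (E n)) \<noteq> {}"
proof -
  define C where "C n = closed_cu_nbhd L (U n) (KK n) (E n)" for n
  have "C m \<subseteq> C n" if "n \<le> m" for n m
    using lift_Suc_antimono_le[of C, OF _ that] nested unfolding C_def by blast
  moreover have "U m \<in> C m" for m
    using U E(1) unfolding C_def closed_cu_nbhd_def by (simp add: less_imp_le)
  ultimately have near: "norm (U m z - U n z) \<le> E n" if "n \<le> m" "z \<in> KK n" for n m z
    using that unfolding C_def closed_cu_nbhd_def by blast
  have "E \<longlonglongrightarrow> 0"
    using E by (rule LIMSEQ_halving_zero)
  moreover have "\<exists>n. L \<inter> cball 0 R \<subseteq> KK n" for R
  proof
    have "cball 0 R \<subseteq> cball (0::complex) (real (nat \<lceil>R\<rceil>))"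
      by (intro cball_subset_cball_iff[THEN iffD2] disjI1) (simp add: real_nat_ceiling_ge)
    then show "L \<inter> cball 0 R \<subseteq> KK (Suc (nat \<lceil>R\<rceil>))"
      using exhaust[of "nat \<lceil>R\<rceil>"] by blast
  qed
  moreover have "incseq KK"
    using KK(2) by (rule incseq_SucI)
  ultimately obtain v where "v \<in> CL L" "\<And>n z. z \<in> KK n \<Longrightarrow> norm (v z - U n z) \<le> E n"
    using CL_limit_of_nested[where U = U and K = KK and E = E, OF U KK(1)] near by blast
  then have "v \<in> (\<Inter>n. closed_cu_nbhd L (U n) (KK n) (E n))"
    unfolding closed_cu_nbhd_def by blast
  then show ?thesis
    by blast
qed

text \<open>The condition \<open>L \<inter> cball 0 n \<subseteq> KK (Suc n)\<close> makes the compacts exhaust \<open>L\<close>, so that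
  the centres converge locally uniformly.\<close>

lemma nested_closed_cu_nbhds_inside_open_dense:
  fixes G :: "nat \<Rightarrow> (complex \<Rightarrow> complex) set"
  assumes L: "closed L" and G_open: "\<And>n. openin (CL_top L) (G n)"
    and G_dense: "\<And>n. CL_top L closure_of G n = topspace (CL_top L)"
    and u: "u \<in> CL L" "compact K" "K \<subseteq> L" "e > 0"
  obtains U KK E where "(U 0, KK 0, E 0) = (u, K, e)"
    "\<And>n. U n \<in> CL L" "\<And>n. KK n \<subseteq> L" "\<And>n. E n > 0"
    "\<And>n. KK n \<subseteq> KK (Suc n)" "\<And>n. L \<inter> cball 0 (real n) \<subseteq> KK (Suc n)" "\<And>n. E (Suc n) \<le> E n / 2"
    "\<And>n. closed_cu_nbhd L (U (Suc n)) (KK (Suc n)) (E (Suc n)) \<subseteq> G n \<inter> cu_nbhd L (U n) (KK n) (E n)"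
proof -
  define P where "P n = (\<lambda>(u', K', e'). u' \<in> CL L \<and> compact K' \<and> K' \<subseteq> L \<and> (e'::real) > 0 \<and>
      (n = 0 \<longrightarrow> (u', K', e') = (u, K, e)))" for n :: nat
  define Q where "Q n = (\<lambda>(u, K, e) (u', K', e'). K \<subseteq> K' \<and> L \<inter> cball 0 (real n) \<subseteq> K' \<and>
      e' \<le> e / 2 \<and> closed_cu_nbhd L u' K' e' \<subseteq> G n \<inter> cu_nbhd L u K e)" for n :: nat
  have "\<exists>s'. P (Suc n) s' \<and> Q n s s'" if "P n s" for n s
  proof -
    obtain u0 K0 e0 where s: "s = (u0, K0, e0)"
      by (cases s)
    then have "u0 \<in> CL L" "compact K0" "K0 \<subseteq> L" "e0 > 0"
      using that unfolding P_def by simp_all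
    then obtain u' K' e' where "u' \<in> CL L" "compact K'" "K0 \<subseteq> K'" "K' \<subseteq> L"
      "L \<inter> cball 0 (real n) \<subseteq> K'" "e' > 0" "e' \<le> e0 / 2"
      "closed_cu_nbhd L u' K' e' \<subseteq> G n \<inter> cu_nbhd L u0 K0 e0"
      by (rule closed_cu_nbhd_inside_open_dense[OF L G_open G_dense])
    then show ?thesis
      unfolding s P_def Q_def by (intro exI[of _ "(u', K', e')"]) simp
  qed
  moreover have "P 0 (u, K, e)"
    using u unfolding P_def by simp
  ultimately obtain f where f: "\<And>n. P n (f n)" "\<And>n. Q n (f n) (f (Suc n))"
    using dependent_nat_choice[of P Q] by blast
  define U where "U n = fst (f n)" for n
  define KK where "KK n = fst (snd (f n))" for n
  define E where "E n = snd (snd (f n))" for n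
  have f_eq: "f n = (U n, KK n, E n)" for n
    unfolding U_def KK_def E_def by simp
  show ?thesis
  proof (rule that)
    show "(U 0, KK 0, E 0) = (u, K, e)"
      using f(1)[of 0] unfolding f_eq P_def by simp
  qed (use f in \<open>simp_all add: f_eq P_def Q_def\<close>)
qed

lemma CL_top_Baire_sequence:
  fixes G :: "nat \<Rightarrow> (complex \<Rightarrow> complex) set"
  assumes L: "closed L" and G_open: "\<And>n. openin (CL_top L) (G n)"
    and G_dense: "\<And>n. CL_top L closure_of G n = topspace (CL_top L)"
    and u: "u \<in> CL L" "compact K" "K \<subseteq> L" "e > 0"
  shows "(\<Inter>n. G n) \<inter> cu_nbhd L u K e \<noteq> {}"
proof -
  obtain U KK E where start: "(U 0, KK 0, E 0) = (u, K, e)"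
    and U: "\<And>n. U n \<in> CL L" and KK: "\<And>n. KK n \<subseteq> L" and E: "\<And>n. E n > 0"
    and KK_Suc: "\<And>n. KK n \<subseteq> KK (Suc n)" and KK_cball: "\<And>n. L \<inter> cball 0 (real n) \<subseteq> KK (Suc n)"
    and E_Suc: "\<And>n. E (Suc n) \<le> E n / 2"
    and nested: "\<And>n. closed_cu_nbhd L (U (Suc n)) (KK (Suc n)) (E (Suc n)) \<subseteq> G n \<inter> cu_nbhd L (U n) (KK n) (E n)"
    by (rule nested_closed_cu_nbhds_inside_open_dense[where G = G, OF L G_open G_dense u]) blast
  then have "closed_cu_nbhd L (U (Suc n)) (KK (Suc n)) (E (Suc n)) \<subseteq> closed_cu_nbhd L (U n) (KK n) (E n)" for n
    using cu_nbhd_subset_closed_cu_nbhd by blast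
  then obtain v where "\<And>n. v \<in> closed_cu_nbhd L (U n) (KK n) (E n)"
    using nested_closed_cu_nbhds_Inter_nonempty[where U = U and KK = KK and E = E, OF U KK KK_Suc KK_cball E E_Suc]
    by blast
  then have "v \<in> G n \<inter> cu_nbhd L (U n) (KK n) (E n)" for n
    using nested by blast
  then show ?thesis
    using start by blast
qed

lemma CL_top_Baire:
  assumes L: "closed L" and "countable \<G>"
    and \<G>: "\<And>G. G \<in> \<G> \<Longrightarrow> openin (CL_top L) G \<and> CL_top L closure_of G = topspace (CL_top L)"
  shows "CL_top L closure_of \<Inter>\<G> = topspace (CL_top L)"
proof (cases "\<G> = {}")
  case False
  then obtain G :: "nat \<Rightarrow> (complex \<Rightarrow> complex) set" where G: "range G = \<G>"
    using \<open>countable \<G>\<close> by (metis range_from_nat_into)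
  then have G_open: "openin (CL_top L) (G n)" and G_dense: "CL_top L closure_of G n = topspace (CL_top L)" for n
    using \<G> by blast+
  show ?thesis
    unfolding dense_in_CL_top_iff
  proof (intro ballI allI impI)
    fix u K e assume "u \<in> CL L" "compact K" "K \<subseteq> L" "(e::real) > 0"
    then show "\<Inter>\<G> \<inter> cu_nbhd L u K e \<noteq> {}"
      unfolding G[symmetric] by (rule CL_top_Baire_sequence[OF L G_open G_dense])
  qed
qed simp

lemma CL_top_dense_gdelta_Inter:
  assumes "closed L" "countable \<G>" "\<G> \<noteq> {}"
    and "\<And>G. G \<in> \<G> \<Longrightarrow> openin (CL_top L) G \<and> CL_top L closure_of G = topspace (CL_top L)"
  shows "gdelta_in (CL_top L) (\<Inter>\<G>) \<and> CL_top L closure_of \<Inter>\<G> = topspace (CL_top L)"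
proof
  show "gdelta_in (CL_top L) (\<Inter>\<G>)"
    using assms(2-4) by (intro gdelta_in_Inter open_imp_gdelta_in) auto
  show "CL_top L closure_of \<Inter>\<G> = topspace (CL_top L)"
    by (rule CL_top_Baire[OF assms(1,2,4)])
qed

section \<open>Bounded holomorphic extensions on balls\<close>

text \<open>The clause \<open>L \<inter> ball w r \<noteq> {}\<close> excludes balls missing \<open>L\<close>, on which every function
  would be a restriction vacuously.\<close>

definition bounded_holomorphic_restrictions :: "complex set \<Rightarrow> complex \<Rightarrow> real \<Rightarrow> real
    \<Rightarrow> (complex \<Rightarrow> complex) set" where
  "bounded_holomorphic_restrictions L w r M = {u \<in> CL L. L \<inter> ball w r \<noteq> {} \<and>
     (\<exists>F. F holomorphic_on ball w r \<and> (\<forall>z\<in>ball w r. norm (F z) \<le> M) \<and>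
          (\<forall>z\<in>ball w r \<inter> L. F z = u z))}"

lemma holomorphic_bounded_pointwise_limit:
  assumes "open S" and F: "\<And>n. F n holomorphic_on S" and F_bound: "\<And>n z. z \<in> S \<Longrightarrow> norm (F n z) \<le> M"
    and lim: "\<And>z. z \<in> T \<Longrightarrow> (\<lambda>n. F n z) \<longlonglongrightarrow> u z" and "T \<subseteq> S"
  obtains g where "g holomorphic_on S" "\<And>z. z \<in> S \<Longrightarrow> norm (g z) \<le> M" "\<And>z. z \<in> T \<Longrightarrow> g z = u z"
proof -
  obtain g \<rho> where g: "g holomorphic_on S" "strict_mono (\<rho> :: nat \<Rightarrow> nat)"
    and g_lim: "\<And>z. z \<in> S \<Longrightarrow> (\<lambda>n. F (\<rho> n) z) \<longlonglongrightarrow> g z"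
  proof (rule Montel[of S "range F" F])
    show "\<exists>B. \<forall>h\<in>range F. \<forall>z\<in>C. norm (h z) \<le> B" if "C \<subseteq> S" for C
      using F_bound that by blast
  qed (use \<open>open S\<close> F in auto)
  show ?thesis
  proof (rule that[OF g(1)])
    show "norm (g z) \<le> M" if "z \<in> S" for z
      using Lim_norm_ubound[OF trivial_limit_sequentially g_lim[OF that]] F_bound[OF that] by simp
    show "g z = u z" if "z \<in> T" for z
    proof (rule LIMSEQ_unique)
      show "(\<lambda>n. F (\<rho> n) z) \<longlonglongrightarrow> g z"
        using g_lim that \<open>T \<subseteq> S\<close> by blast
      show "(\<lambda>n. F (\<rho> n) z) \<longlonglongrightarrow> u z"
        using LIMSEQ_subseq_LIMSEQ[OF lim[OF that] g(2)] by (simp add: comp_def)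
    qed
  qed
qed

lemma eventually_in_cball_shrinking:
  assumes "z \<in> ball w r"
  shows "\<forall>\<^sub>F n in sequentially. z \<in> cball w (r - inverse (Suc n))"
proof -
  obtain N where N: "inverse (Suc N) < r - dist w z"
    using assms reals_Archimedean[of "r - dist w z"] by auto
  have "z \<in> cball w (r - inverse (Suc n))" if "N \<le> n" for n
  proof -
    have "inverse (real (Suc n)) \<le> inverse (Suc N)"
      using that by (simp add: field_simps)
    then have "dist w z \<le> r - inverse (Suc n)"
      using N by linarith
    then show ?thesis
      by simp
  qed
  then show ?thesis
    unfolding eventually_sequentially by blast
qed

lemma mem_closure_bounded_holomorphic_restrictionsE:
  assumes "u \<in> CL_top L closure_of bounded_holomorphic_restrictions L w r M"
    and "compact K" "K \<subseteq> L \<inter> ball w r" "e > 0"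
  obtains F where "F holomorphic_on ball w r" "\<And>z. z \<in> ball w r \<Longrightarrow> norm (F z) \<le> M"
    "\<And>z. z \<in> K \<Longrightarrow> norm (F z - u z) < e"
proof -
  have "K \<subseteq> L"
    using assms(3) by blast
  then have "bounded_holomorphic_restrictions L w r M \<inter> cu_nbhd L u K e \<noteq> {}"
    by (rule assms(1)[unfolded mem_closure_of_CL_top, THEN conjunct2, rule_format, OF assms(2) _ assms(4)])
  then obtain v where "v \<in> bounded_holomorphic_restrictions L w r M" and v_near: "v \<in> cu_nbhd L u K e"
    by blast
  then obtain F where F: "F holomorphic_on ball w r" "\<forall>z\<in>ball w r. norm (F z) \<le> M"
    and F_eq: "\<forall>z\<in>ball w r \<inter> L. F z = v z"
    unfolding bounded_holomorphic_restrictions_def by blast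
  have "norm (F z - u z) < e" if "z \<in> K" for z
  proof -
    have "F z = v z"
      using F_eq assms(3) that by blast
    then show ?thesis
      using v_near that unfolding cu_nbhd_def by auto
  qed
  with F that show ?thesis
    by blast
qed

lemma closedin_bounded_holomorphic_restrictions:
  assumes L: "closed L"
  shows "closedin (CL_top L) (bounded_holomorphic_restrictions L w r M)"
  unfolding closure_of_subset_eq[symmetric]
proof (rule conjI)
  show "bounded_holomorphic_restrictions L w r M \<subseteq> topspace (CL_top L)"
    unfolding topspace_CL_top bounded_holomorphic_restrictions_def by blast
next
  show "CL_top L closure_of bounded_holomorphic_restrictions L w r M \<subseteq> bounded_holomorphic_restrictions L w r M"
  proof
    fix u assume u: "u \<in> CL_top L closure_of bounded_holomorphic_restrictions L w r M"
    then have "u \<in> CL L" and meets: "\<And>K e. compact K \<Longrightarrow> K \<subseteq> L \<Longrightarrow> e > 0 \<Longrightarrow>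
        bounded_holomorphic_restrictions L w r M \<inter> cu_nbhd L u K e \<noteq> {}"
      unfolding mem_closure_of_CL_top by blast+
    have "L \<inter> ball w r \<noteq> {}"
      using meets[of "{}" 1] unfolding bounded_holomorphic_restrictions_def by auto
    define K where "K n = L \<inter> cball w (r - inverse (Suc n))" for n :: nat
    have "cball w (r - inverse (Suc n)) \<subseteq> ball w r" for n
      by (simp add: cball_subset_ball_iff)
    then have "compact (K n)" "K n \<subseteq> L \<inter> ball w r" for n
      unfolding K_def using L by (auto intro: closed_Int_compact)
    have "\<exists>F. F holomorphic_on ball w r \<and> (\<forall>z\<in>ball w r. norm (F z) \<le> M) \<and>
        (\<forall>z\<in>K n. norm (F z - u z) < inverse (Suc n))" for n
    proof -
      obtain F where "F holomorphic_on ball w r" "\<And>z. z \<in> ball w r \<Longrightarrow> norm (F z) \<le> M"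
        "\<And>z. z \<in> K n \<Longrightarrow> norm (F z - u z) < inverse (Suc n)"
        by (rule mem_closure_bounded_holomorphic_restrictionsE[OF u \<open>compact (K n)\<close> \<open>K n \<subseteq> L \<inter> ball w r\<close>,
              of "inverse (Suc n)"]) simp_all
      then show ?thesis
        by blast
    qed
    then obtain F where F: "\<And>n. F n holomorphic_on ball w r" "\<And>n z. z \<in> ball w r \<Longrightarrow> norm (F n z) \<le> M"
      and F_near: "\<And>n z. z \<in> K n \<Longrightarrow> norm (F n z - u z) < inverse (Suc n)"
      by metis
    have lim: "(\<lambda>n. F n z) \<longlonglongrightarrow> u z" if z: "z \<in> ball w r \<inter> L" for z
    proof -
      have "\<forall>\<^sub>F n in sequentially. z \<in> K n"
        using eventually_in_cball_shrinking[of z w r] z unfolding K_def by simp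
      then have "\<forall>\<^sub>F n in sequentially. norm (F n z - u z) \<le> inverse (Suc n)"
        by eventually_elim (use F_near in \<open>simp add: less_imp_le\<close>)
      then have "(\<lambda>n. F n z - u z) \<longlonglongrightarrow> 0"
        by (rule Lim_null_comparison[OF _ LIMSEQ_inverse_real_of_nat])
      then show ?thesis
        by (rule LIM_zero_cancel)
    qed
    obtain g where "g holomorphic_on ball w r" "\<And>z. z \<in> ball w r \<Longrightarrow> norm (g z) \<le> M"
      "\<And>z. z \<in> ball w r \<inter> L \<Longrightarrow> g z = u z"
      by (rule holomorphic_bounded_pointwise_limit[where T = "ball w r \<inter> L", OF open_ball F lim]) auto
    then show "u \<in> bounded_holomorphic_restrictions L w r M"
      unfolding bounded_holomorphic_restrictions_def using \<open>u \<in> CL L\<close> \<open>L \<inter> ball w r \<noteq> {}\<close> by blast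
  qed
qed

lemma holomorphic_eq_on_ball_if_eq_near_limit_point:
  assumes F: "F holomorphic_on ball w r" and G: "G holomorphic_on ball w r"
    and z1: "z1 \<in> ball w r" "z1 islimpt A" and "s > 0"
    and eq: "\<And>z. z \<in> A \<inter> ball z1 s \<inter> ball w r \<Longrightarrow> F z = G z" and p: "p \<in> ball w r"
  shows "F p = G p"
proof -
  define t where "t = min s (r - dist w z1)"
  have "t > 0"
    using \<open>s > 0\<close> z1(1) unfolding t_def by simp
  have "ball z1 t \<subseteq> ball w r"
    unfolding t_def by (auto simp: ball_subset_ball_iff dist_commute min_def)
  have "F p - G p = 0"
  proof (rule analytic_continuation[of "\<lambda>z. F z - G z" "ball w r" "A \<inter> ball z1 t" z1])
    show "(\<lambda>z. F z - G z) holomorphic_on ball w r"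
      using F G by (rule holomorphic_on_diff)
    show "A \<inter> ball z1 t \<subseteq> ball w r"
      using \<open>ball z1 t \<subseteq> ball w r\<close> by blast
    show "z1 islimpt A \<inter> ball z1 t"
      using z1(2) \<open>t > 0\<close> by (intro islimpt_Int_eventually eventually_at_in_open') auto
    show "F z - G z = 0" if "z \<in> A \<inter> ball z1 t" for z
      using eq[of z] that \<open>ball z1 t \<subseteq> ball w r\<close> unfolding t_def by auto
  qed (use z1(1) p in auto)
  then show ?thesis
    by simp
qed

lemma add_bump_in_cu_nbhd:
  assumes u: "u \<in> CL L" and b: "continuous_on L b" "\<And>z. z \<in> L \<Longrightarrow> \<bar>b z\<bar> < e" and "K \<subseteq> L"
  shows "(\<lambda>z. if z \<in> L then u z + of_real (b z) else 0) \<in> cu_nbhd L u K e"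
proof -
  have "continuous_on L (\<lambda>z. u z + of_real (b z))"
    using u b(1) unfolding CL_def by (intro continuous_intros) auto
  then have "continuous_on L (\<lambda>z. if z \<in> L then u z + of_real (b z) else 0)"
    by (rule continuous_on_eq) simp
  then show ?thesis
    using b(2) \<open>K \<subseteq> L\<close> unfolding cu_nbhd_def CL_def by auto
qed

lemma dense_CL_diff_bounded_holomorphic_restrictions:
  assumes L: "closed L" and perfect: "\<And>x. x \<in> L \<Longrightarrow> x islimpt L"
  shows "CL_top L closure_of (CL L - bounded_holomorphic_restrictions L w r M) = topspace (CL_top L)"
  unfolding dense_in_CL_top_iff
proof (intro ballI allI impI)
  fix u K e assume u: "u \<in> CL L" and "compact K" "K \<subseteq> L" and "(e::real) > 0"
  show "(CL L - bounded_holomorphic_restrictions L w r M) \<inter> cu_nbhd L u K e \<noteq> {}"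
  proof (cases "u \<in> bounded_holomorphic_restrictions L w r M")
    case False
    then show ?thesis
      using u centre_in_cu_nbhd[OF u \<open>e > 0\<close>] by blast
  next
    case True
    then obtain z1 F1 where z1: "z1 \<in> L" "z1 \<in> ball w r" and F1: "F1 holomorphic_on ball w r"
      and F1_eq: "\<forall>z\<in>ball w r \<inter> L. F1 z = u z"
      unfolding bounded_holomorphic_restrictions_def by blast
    obtain p where p: "p \<in> L" "p \<in> ball w r" "p \<noteq> z1"
      using islimptE[OF perfect[OF z1(1)] z1(2) open_ball] by metis
    define A where "A = L \<inter> cball z1 (dist z1 p / 2)"
    have "p \<notin> A"
      using p(3) unfolding A_def by simp
    then have "infdist p A > 0"
      using L z1(1) unfolding A_def by (intro infdist_pos_not_in_closed) (auto intro: closed_Int)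
    define b where "b z = e/2 * min 1 (infdist z A)" for z
    define v where "v z = (if z \<in> L then u z + of_real (b z) else 0)" for z
    have "\<bar>b z\<bar> < e" for z
      using \<open>e > 0\<close> infdist_nonneg[of z A] unfolding b_def by simp
    then have "v \<in> cu_nbhd L u K e"
      unfolding v_def b_def using u \<open>K \<subseteq> L\<close>
      by (intro add_bump_in_cu_nbhd continuous_intros) auto
    moreover have "v \<notin> bounded_holomorphic_restrictions L w r M"
    proof
      assume "v \<in> bounded_holomorphic_restrictions L w r M"
      then obtain F2 where F2: "F2 holomorphic_on ball w r" and F2_eq: "\<forall>z\<in>ball w r \<inter> L. F2 z = v z"
        unfolding bounded_holomorphic_restrictions_def by blast
      have "F2 z = F1 z" if "z \<in> L \<inter> ball z1 (dist z1 p / 2) \<inter> ball w r" for z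
      proof -
        have "z \<in> A"
          using that unfolding A_def by auto
        then show ?thesis
          using that F1_eq F2_eq unfolding v_def b_def by auto
      qed
      then have "F2 p = F1 p"
        using p(3) by (intro holomorphic_eq_on_ball_if_eq_near_limit_point[where s = "dist z1 p / 2",
            OF F2 F1 z1(2) perfect[OF z1(1)] _ _ p(2)]) auto
      then have "b p = 0"
        using F1_eq F2_eq p(1,2) unfolding v_def by simp
      then show False
        using \<open>infdist p A > 0\<close> \<open>e > 0\<close> unfolding b_def by simp
    qed
    ultimately show ?thesis
      using cu_nbhd_subset_CL by blast
  qed
qed

lemma open_dense_CL_diff_bounded_holomorphic_restrictions:
  assumes "closed L" "\<And>x. x \<in> L \<Longrightarrow> x islimpt L"
  shows "openin (CL_top L) (CL L - bounded_holomorphic_restrictions L w r M) \<and>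
    CL_top L closure_of (CL L - bounded_holomorphic_restrictions L w r M) = topspace (CL_top L)"
  using openin_diff[OF openin_topspace closedin_bounded_holomorphic_restrictions[OF assms(1)]]
    dense_CL_diff_bounded_holomorphic_restrictions[OF assms] unfolding topspace_CL_top by simp

lemma locally_holomorphic_imp_bounded_holomorphic_restriction:
  assumes basis: "topological_basis (case_prod ball ` B)" and u: "u \<in> CL L"
    and "z0 \<in> L" "r > 0" and F: "F holomorphic_on ball z0 r" and F_eq: "\<forall>z\<in>ball z0 r \<inter> L. F z = u z"
  shows "\<exists>(w, c)\<in>B. \<exists>m::nat. u \<in> bounded_holomorphic_restrictions L w c m"
proof -
  have "cball z0 (r/2) \<subseteq> ball z0 r"
    using \<open>r > 0\<close> by (simp add: cball_subset_ball_iff)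
  then have "compact (F ` cball z0 (r/2))"
    using holomorphic_on_imp_continuous_on[OF F]
    by (intro compact_continuous_image compact_cball) (rule continuous_on_subset)
  then obtain bound where bound: "\<And>z. z \<in> cball z0 (r/2) \<Longrightarrow> norm (F z) \<le> bound"
    unfolding bounded_iff[symmetric] by (meson compact_imp_bounded bounded_iff image_eqI)
  obtain V where "V \<in> case_prod ball ` B" "z0 \<in> V" "V \<subseteq> ball z0 (r/2)"
    using topological_basisE[OF basis, of "ball z0 (r/2)" z0] \<open>r > 0\<close> by auto
  then obtain w c where "(w, c) \<in> B" and z0_in: "z0 \<in> ball w c" and sub: "ball w c \<subseteq> ball z0 (r/2)"
    by auto
  have sub_r: "ball w c \<subseteq> ball z0 r"
    using sub subset_ball[of "r/2" r z0] \<open>r > 0\<close> by simp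
  have "u \<in> bounded_holomorphic_restrictions L w c (real (nat \<lceil>bound\<rceil>))"
    unfolding bounded_holomorphic_restrictions_def
  proof (intro CollectI conjI exI[of _ F])
    show "F holomorphic_on ball w c"
      using F sub_r by (rule holomorphic_on_subset)
    show "\<forall>z\<in>ball w c. norm (F z) \<le> real (nat \<lceil>bound\<rceil>)"
      using sub bound by (meson ball_subset_cball order_trans real_nat_ceiling_ge subsetD)
    show "\<forall>z\<in>ball w c \<inter> L. F z = u z"
      using F_eq sub_r by auto
  qed (use u \<open>z0 \<in> L\<close> z0_in in auto)
  with \<open>(w, c) \<in> B\<close> show ?thesis
    by blast
qed

lemma bounded_holomorphic_restriction_imp_locally_holomorphic:
  assumes "u \<in> bounded_holomorphic_restrictions L w r M"
  shows "\<exists>z0\<in>L. \<exists>r>0. \<exists>F. F holomorphic_on ball z0 r \<and> (\<forall>z\<in>ball z0 r \<inter> L. F z = u z)"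
proof -
  obtain z F where z: "z \<in> L" "z \<in> ball w r" and F: "F holomorphic_on ball w r"
    and F_eq: "\<forall>z\<in>ball w r \<inter> L. F z = u z"
    using assms unfolding bounded_holomorphic_restrictions_def by blast
  have sub: "ball z (r - dist w z) \<subseteq> ball w r"
    by (simp add: ball_subset_ball_iff dist_commute)
  show ?thesis
  proof (intro bexI exI conjI)
    show "F holomorphic_on ball z (r - dist w z)"
      using F sub by (rule holomorphic_on_subset)
    show "\<forall>y\<in>ball z (r - dist w z) \<inter> L. F y = u y"
      using F_eq sub by blast
  qed (use z in auto)
qed

lemma nowhere_locally_holomorphic_eq_Inter:
  assumes basis: "topological_basis (case_prod ball ` B)" and "B \<noteq> {}"
  shows "{u \<in> CL L. \<not> (\<exists>z0\<in>L. \<exists>r>0. \<exists>F. F holomorphic_on ball z0 r \<and> (\<forall>z\<in>ball z0 r \<inter> L. F z = u z))} =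
    (\<Inter>((w, r), m)\<in>B \<times> UNIV. CL L - bounded_holomorphic_restrictions L w r (real m))"
    (is "?N = ?I")
proof (intro equalityI subsetI)
  fix u assume u: "u \<in> ?N"
  then have "u \<notin> bounded_holomorphic_restrictions L w r (real m)" for w r m
    using bounded_holomorphic_restriction_imp_locally_holomorphic[of u L w r "real m"] by blast
  with u show "u \<in> ?I"
    by auto
next
  fix u assume "u \<in> ?I"
  then have "u \<in> CL L" and "\<And>w r m. (w, r) \<in> B \<Longrightarrow> u \<notin> bounded_holomorphic_restrictions L w r (real m)"
    using \<open>B \<noteq> {}\<close> by auto
  then show "u \<in> ?N"
    using locally_holomorphic_imp_bounded_holomorphic_restriction[OF basis] by fast
qed

theorem theorem6p4:
  fixes L :: "complex set"
  assumes "closed L" and "L \<noteq> {}" and "\<forall>x\<in>L. x islimpt L"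
  defines "N \<equiv> {u \<in> CL L. \<not> (\<exists>z0\<in>L. \<exists>r>0. \<exists>F. F holomorphic_on ball z0 r \<and>
                   (\<forall>z\<in>ball z0 r \<inter> L. F z = u z))}"
  shows "gdelta_in (CL_top L) N \<and> (CL_top L) closure_of N = topspace (CL_top L)"
proof -
  obtain D :: "complex set" where basis: "topological_basis (case_prod ball ` (D \<times> (\<rat> \<inter> {0<..})))"
    and "countable D" "D \<noteq> {}"
    by (rule balls_countable_basis)
  define \<G> where "\<G> = (\<lambda>((w, r), m). CL L - bounded_holomorphic_restrictions L w r (real m)) `
      ((D \<times> (\<rat> \<inter> {0<..})) \<times> (UNIV :: nat set))"
  have "(1::real) \<in> \<rat> \<inter> {0<..}"
    by (intro IntI Rats_1) simp
  then have B_ne: "D \<times> (\<rat> \<inter> {0<..} :: real set) \<noteq> {}"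
    using \<open>D \<noteq> {}\<close> by blast
  have N_eq: "N = \<Inter>\<G>"
    unfolding N_def \<G>_def by (rule nowhere_locally_holomorphic_eq_Inter[OF basis B_ne])
  have "\<G> \<noteq> {}"
    unfolding \<G>_def using B_ne by blast
  have "countable \<G>"
    unfolding \<G>_def using \<open>countable D\<close> by (intro countable_image countable_SIGMA countable_Int1 countable_rat) auto
  have "openin (CL_top L) G \<and> CL_top L closure_of G = topspace (CL_top L)" if "G \<in> \<G>" for G
    using that open_dense_CL_diff_bounded_holomorphic_restrictions[OF assms(1)] assms(3)
    unfolding \<G>_def by auto
  then show ?thesis
    unfolding N_eq by (rule CL_top_dense_gdelta_Inter[OF assms(1) \<open>countable \<G>\<close> \<open>\<G> \<noteq> {}\<close>])
qed

end
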